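(* Let $C$ be an open cone containing no lines, with basepoint $b\in C$. The set of horofunctions of the Hilbert geometry on $C$ is $$\{\,r_{C,x}+f \;:\; x\in\partial C\setminus\{0\},\ f\in A_C(x)\,\}.$$
   Context: $V$ is a finite-dimensional real vector space. An open cone is a nonempty open convex set $T\subset V$ with $\lambda T\subseteq T$ for all $\lambda>0$ and $0\notin T$; $\partial T$ is its boundary in $V$. Write $x\le_T y$ iff $y-x\in\overline T$, $[0]_T:=\overline T\cap(-\overline T)$ (so $[0]_C=\{0\}$ when $C$ has no lines). $M_T(y/x):=\inf\{\lambda>0:y\le_T\lambda x\}$ ($y\in V,x\in T$), $F_T(y,x):=\log M_T(y/x)$, $RF_T(x,y):=F_T(y,x)$, $H_C(x,y):=F_C(x,y)+F_C(y,x)$. For $p\in\partial C\setminus\{0\}$, $r_{C,p}(x):=RF_C(x,p)-RF_C(b,p)$. For $d\in\{F_C,H_C\}$, a sequence $(x_n)$ in $C$ converges in the $d$-sense to $g$ if $d(\cdot,x_n)-d(b,x_n)\to g$ pointwise on $C$; a horofunction of $d$ is such a limit not of the form $d(\cdot,p)-d(b,p)$, $p\in C$. For $x\in\partial C\setminus\{0\}$, $A_C(x)$ is the set of Funk-geometry horofunctions ($d=F_C$) that are Funk-sense limits of sequences in $C$ converging to $x$ in the usual topology of $V$. *)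

theory Defs
  imports "HOL-Analysis.Analysis"
begin

definition open_cone :: "'a::euclidean_space set \<Rightarrow> bool" where
  "open_cone T \<longleftrightarrow> T \<noteq> {} \<and> open T \<and> convex T \<and>
     (\<forall>l::real. l > 0 \<longrightarrow> (\<forall>x\<in>T. l *\<^sub>R x \<in> T)) \<and> 0 \<notin> T"

definition contains_no_lines :: "'a::euclidean_space set \<Rightarrow> bool" where
  "contains_no_lines C \<longleftrightarrow> \<not> (\<exists>x v. v \<noteq> 0 \<and> (\<forall>t::real. x + t *\<^sub>R v \<in> C))"

definition cone_le :: "'a::euclidean_space set \<Rightarrow> 'a \<Rightarrow> 'a \<Rightarrow> bool" where
  "cone_le T x y \<longleftrightarrow> y - x \<in> closure T"

definition cone_M :: "'a::euclidean_space set \<Rightarrow> 'a \<Rightarrow> 'a \<Rightarrow> real" where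
  "cone_M T y x = Inf {l::real. l > 0 \<and> cone_le T y (l *\<^sub>R x)}"

definition funk :: "'a::euclidean_space set \<Rightarrow> 'a \<Rightarrow> 'a \<Rightarrow> real" where
  "funk T y x = ln (cone_M T y x)"

definition rev_funk :: "'a::euclidean_space set \<Rightarrow> 'a \<Rightarrow> 'a \<Rightarrow> real" where
  "rev_funk T x y = funk T y x"

definition hilbert :: "'a::euclidean_space set \<Rightarrow> 'a \<Rightarrow> 'a \<Rightarrow> real" where
  "hilbert C x y = funk C x y + funk C y x"

definition r_fun :: "'a::euclidean_space set \<Rightarrow> 'a \<Rightarrow> 'a \<Rightarrow> 'a \<Rightarrow> real" where
  "r_fun C b p x = rev_funk C x p - rev_funk C b p"

definition d_converges ::
  "('a \<Rightarrow> 'a \<Rightarrow> real) \<Rightarrow> 'a set \<Rightarrow> 'a \<Rightarrow> (nat \<Rightarrow> 'a) \<Rightarrow> ('a \<Rightarrow> real) \<Rightarrow> bool" where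
  "d_converges d C b xs g \<longleftrightarrow> (\<forall>y\<in>C. ((\<lambda>n. d y (xs n) - d b (xs n)) \<longlonglongrightarrow> g y))"

text \<open>Horofunctions of d on C with basepoint b. Functions on C are represented
  canonically as functions 'a => real vanishing outside C.\<close>
definition horofunctions ::
  "('a \<Rightarrow> 'a \<Rightarrow> real) \<Rightarrow> 'a set \<Rightarrow> 'a \<Rightarrow> ('a \<Rightarrow> real) set" where
  "horofunctions d C b = {g. (\<forall>y. y \<notin> C \<longrightarrow> g y = 0) \<and>
      (\<exists>xs. (\<forall>n. xs n \<in> C) \<and> d_converges d C b xs g) \<and>
      \<not> (\<exists>p\<in>C. \<forall>y\<in>C. g y = d y p - d b p)}"

definition A_set :: "'a::euclidean_space set \<Rightarrow> 'a \<Rightarrow> 'a \<Rightarrow> ('a \<Rightarrow> real) set" where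
  "A_set C b x = {g. g \<in> horofunctions (funk C) C b \<and>
      (\<exists>xs. (\<forall>n. xs n \<in> C) \<and> xs \<longlonglongrightarrow> x \<and> d_converges (funk C) C b xs g)}"

end

theory Submission
  imports Defs
begin

text \<open>
  The Hilbert distance is the sum of the Funk distance F(y, x) = log M(y/x) and the reverse Funk
  distance F(x, y), and it does not change when x is rescaled. A Hilbert-convergent sequence can
  therefore be normalised to the unit sphere and, by compactness, assumed to converge to some
  z \<noteq> 0 in the closure of C. If z \<in> C the limit is an internal function. Otherwise z lies on the
  boundary, the reverse Funk part converges to r_{C,z} because M(z/y) is continuous (indeed
  Lipschitz) in z, and hence the Funk part converges to g - r_{C,z}.

  That the limits obtained this way are genuine horofunctions rests on one observation: as
  x_n \<rightarrow> z \<notin> C we have M(b/x_n) \<rightarrow> \<infinity>, and this forces every Funk limit along (x_n) to be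
  invariant under translation by z. Internal Funk and Hilbert functions centred at p, on the
  other hand, strictly increase from p to p + z.
\<close>

lemma d_converges_cong:
  "(\<And>y. y \<in> C \<Longrightarrow> g y = g' y) \<Longrightarrow> d_converges d C b xs g \<longleftrightarrow> d_converges d C b xs g'"
  by (simp add: d_converges_def)

locale open_cone_geometry =
  fixes C :: "'a::euclidean_space set"
  assumes open_cone: "open_cone C"
begin

lemma open_C: "open C" and convex_C: "convex C" and zero_notin_C: "0 \<notin> C"
  and C_nonempty: "C \<noteq> {}"
  using open_cone by (auto simp: open_cone_def)

lemma scaleR_mem: "0 < c \<Longrightarrow> x \<in> C \<Longrightarrow> c *\<^sub>R x \<in> C"
  using open_cone by (simp add: open_cone_def)

lemma frontier_C: "frontier C = closure C - C"
  using open_C by (simp add: frontier_def interior_open)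

lemma zero_in_closure: "0 \<in> closure C"
proof -
  obtain x where x: "x \<in> C" using C_nonempty by blast
  have "\<forall>\<^sub>F t in at_right 0. t *\<^sub>R x \<in> closure C"
    using eventually_at_right_less by eventually_elim (use x scaleR_mem closure_subset in blast)
  moreover have "((\<lambda>t. t *\<^sub>R x) \<longlongrightarrow> 0 *\<^sub>R x) (at_right 0)"
    by (intro tendsto_intros)
  ultimately show ?thesis
    using Lim_in_closed_set[OF closed_closure _ trivial_limit_at_right_real] by simp
qed

lemma convex_cone_closure: "convex_cone (closure C)"
proof -
  have "conic (insert 0 C)"
    using scaleR_mem by (auto simp: conic_def le_less)
  then have "conic (closure C)"
    using conic_closure zero_in_closure by (metis closure_insert insert_absorb)
  then show ?thesis
    using convex_closure[OF convex_C] zero_in_closure by (auto simp: convex_cone_def)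
qed

lemma add_mem_closure: "x \<in> closure C \<Longrightarrow> y \<in> closure C \<Longrightarrow> x + y \<in> closure C"
  using convex_cone_add[OF convex_cone_closure] .

lemma scaleR_mem_closure: "0 \<le> c \<Longrightarrow> x \<in> closure C \<Longrightarrow> c *\<^sub>R x \<in> closure C"
  using convex_cone_scaleR[OF convex_cone_closure] .

lemma add_closure_mem:
  assumes "x \<in> C" "k \<in> closure C"
  shows "x + k \<in> C"
proof -
  have "midpoint x k \<in> C"
  proof (cases "x = k")
    case False
    then have "midpoint x k \<in> open_segment x k" by simp
    also have "\<dots> \<subseteq> interior C"
      using assms open_C by (intro in_interior_closure_convex_segment convex_C) (auto simp: interior_open)
    finally show ?thesis using open_C by (simp add: interior_open)
  qed (use assms in simp)
  from scaleR_mem[OF _ this, of 2] show ?thesis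
    by (simp add: midpoint_def)
qed

lemma order_unit:
  assumes "x \<in> C"
  obtains e where "0 < e" "\<And>w. (norm w / e) *\<^sub>R x - w \<in> closure C"
proof -
  obtain e where e: "0 < e" "cball x e \<subseteq> C"
    using open_C assms open_contains_cball by blast
  have "(norm w / e) *\<^sub>R x - w \<in> closure C" for w
  proof (cases "w = 0")
    case True
    then show ?thesis using zero_in_closure by simp
  next
    case False
    then have "x - (e / norm w) *\<^sub>R w \<in> C"
      using e by (intro subsetD[OF e(2)]) (simp add: dist_norm)
    from scaleR_mem[OF _ this, of "norm w / e"] False e(1)
    have "(norm w / e) *\<^sub>R x - w \<in> C"
      by (simp add: algebra_simps)
    then show ?thesis using closure_subset by blast
  qed
  with e(1) that show ?thesis by blast
qed

abbreviation M :: "'a \<Rightarrow> 'a \<Rightarrow> real" where "M \<equiv> cone_M C"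

lemma diff_mem_closure_mono:
  assumes "x \<in> closure C" "l \<le> l'" "l *\<^sub>R x - y \<in> closure C"
  shows "l' *\<^sub>R x - y \<in> closure C"
proof -
  have "l' *\<^sub>R x - y = (l *\<^sub>R x - y) + (l' - l) *\<^sub>R x"
    by (simp add: algebra_simps)
  then show ?thesis
    using assms by (metis add_mem_closure diff_ge_0_iff_ge scaleR_mem_closure)
qed

lemma exists_diff_mem_closure:
  assumes "x \<in> C"
  shows "\<exists>l>0. l *\<^sub>R x - y \<in> closure C"
proof -
  obtain e where e: "0 < e" "\<And>w. (norm w / e) *\<^sub>R x - w \<in> closure C"
    using order_unit[OF assms] by blast
  have "(norm y / e + 1) *\<^sub>R x - y \<in> closure C"
    using assms closure_subset by (intro diff_mem_closure_mono[OF _ _ e(2)]) auto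
  moreover have "0 < norm y / e + 1"
    using e(1) by (simp add: add_nonneg_pos)
  ultimately show ?thesis by blast
qed

lemma cone_M_eq: "M y x = Inf {l. 0 < l \<and> l *\<^sub>R x - y \<in> closure C}"
  by (simp add: cone_M_def cone_le_def)

lemma cone_M_nonneg: "x \<in> C \<Longrightarrow> 0 \<le> M y x"
  unfolding cone_M_eq using exists_diff_mem_closure by (intro cInf_greatest) auto

text \<open>The infimum defining M(y/x) is attained, also when it is 0.\<close>

lemma cone_M_le_iff:
  assumes x: "x \<in> C" and c: "0 \<le> c"
  shows "M y x \<le> c \<longleftrightarrow> c *\<^sub>R x - y \<in> closure C"
proof
  define S where "S = {l. 0 < l \<and> l *\<^sub>R x - y \<in> closure C}"
  have M_eq: "M y x = Inf S" and bdd: "bdd_below S"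
    by (auto simp: S_def cone_M_eq intro: bdd_belowI[of _ 0])
  have x_closure: "x \<in> closure C"
    using x closure_subset by blast
  {
    assume "M y x \<le> c"
    have above: "l *\<^sub>R x - y \<in> closure C" if "c < l" for l
    proof -
      have "S \<noteq> {}" "Inf S < l"
        using exists_diff_mem_closure[OF x] \<open>M y x \<le> c\<close> that by (auto simp: S_def M_eq)
      then obtain l' where "l' \<in> S" "l' < l"
        using cInf_less_iff[OF _ bdd] by blast
      then show ?thesis
        using diff_mem_closure_mono[OF x_closure, of l' l y] by (auto simp: S_def)
    qed
    have "\<forall>\<^sub>F l in at_right c. l *\<^sub>R x - y \<in> closure C"
      using eventually_at_right_less[of c] by eventually_elim (rule above)
    moreover have "((\<lambda>l. l *\<^sub>R x - y) \<longlongrightarrow> c *\<^sub>R x - y) (at_right c)"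
      by (intro tendsto_intros)
    ultimately show "c *\<^sub>R x - y \<in> closure C"
      by (rule Lim_in_closed_set[OF closed_closure _ trivial_limit_at_right_real])
  next
    assume "c *\<^sub>R x - y \<in> closure C"
    then have "Inf S \<le> l" if "c < l" for l
      using that c diff_mem_closure_mono[OF x_closure, of c l y]
      by (intro cInf_lower[OF _ bdd]) (auto simp: S_def)
    then show "M y x \<le> c"
      unfolding M_eq by (rule dense_ge)
  }
qed

lemma cone_M_mem: "x \<in> C \<Longrightarrow> M y x *\<^sub>R x - y \<in> closure C"
  using cone_M_le_iff cone_M_nonneg by blast

lemma cone_M_self_le: "x \<in> C \<Longrightarrow> M x x \<le> 1"
  using cone_M_le_iff zero_in_closure by simp

lemma cone_M_mono:
  assumes x: "x \<in> C" and a: "0 \<le> a" and le: "a *\<^sub>R y - y' \<in> closure C"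
  shows "M y' x \<le> a * M y x"
proof -
  have "(a * M y x) *\<^sub>R x - y' = a *\<^sub>R (M y x *\<^sub>R x - y) + (a *\<^sub>R y - y')"
    by (simp add: algebra_simps)
  also have "\<dots> \<in> closure C"
    using a le cone_M_mem[OF x] by (intro add_mem_closure scaleR_mem_closure)
  finally show ?thesis
    using cone_M_le_iff[OF x] a cone_M_nonneg[OF x] by simp
qed

lemma cone_M_antimono:
  assumes x: "x \<in> C" and a: "0 < a" and le: "x' - a *\<^sub>R x \<in> closure C"
  shows "M y x' \<le> M y x / a"
proof -
  have "a *\<^sub>R x + (x' - a *\<^sub>R x) \<in> C"
    using add_closure_mem[OF scaleR_mem[OF a x] le] .
  then have x': "x' \<in> C" by simp
  have "(M y x / a) *\<^sub>R x' - y = (M y x / a) *\<^sub>R (x' - a *\<^sub>R x) + (M y x *\<^sub>R x - y)"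
    using a by (simp add: algebra_simps)
  also have "\<dots> \<in> closure C"
    using a le cone_M_mem[OF x] cone_M_nonneg[OF x] by (intro add_mem_closure scaleR_mem_closure) auto
  finally show ?thesis
    using cone_M_le_iff[OF x'] a cone_M_nonneg[OF x] by simp
qed

lemma cone_M_subadd:
  assumes x: "x \<in> C"
  shows "M (u + w) x \<le> M u x + M w x"
proof -
  have "(M u x + M w x) *\<^sub>R x - (u + w) = (M u x *\<^sub>R x - u) + (M w x *\<^sub>R x - w)"
    by (simp add: algebra_simps)
  also have "\<dots> \<in> closure C"
    using cone_M_mem[OF x] by (intro add_mem_closure)
  finally show ?thesis
    using cone_M_le_iff[OF x] cone_M_nonneg[OF x] by simp
qed

lemma cone_M_scaleR_left:
  assumes "x \<in> C" "0 < c"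
  shows "M (c *\<^sub>R y) x = c * M y x"
proof (rule antisym)
  show "M (c *\<^sub>R y) x \<le> c * M y x"
    using cone_M_mono[OF assms(1), of c y] assms(2) zero_in_closure by simp
  have "M y x \<le> inverse c * M (c *\<^sub>R y) x"
    using cone_M_mono[OF assms(1), of "inverse c" "c *\<^sub>R y" y] assms(2) zero_in_closure by simp
  then show "c * M y x \<le> M (c *\<^sub>R y) x"
    using assms(2) by (simp add: field_simps)
qed

lemma cone_M_scaleR_right:
  assumes "x \<in> C" "0 < c"
  shows "M y (c *\<^sub>R x) = M y x / c"
proof (rule antisym)
  show "M y (c *\<^sub>R x) \<le> M y x / c"
    using cone_M_antimono[OF assms(1,2)] zero_in_closure by simp
  have "M y x \<le> M y (c *\<^sub>R x) / inverse c"
    using cone_M_antimono[OF scaleR_mem[OF assms(2,1)], of "inverse c" x] assms(2) zero_in_closure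
    by simp
  then show "M y x / c \<le> M y (c *\<^sub>R x)"
    using assms(2) by (simp add: field_simps)
qed

lemma lipschitz_cone_M_left:
  assumes x: "x \<in> C"
  obtains L where "L-lipschitz_on UNIV (\<lambda>y. M y x)"
proof -
  obtain e where e: "0 < e" "\<And>w. (norm w / e) *\<^sub>R x - w \<in> closure C"
    using order_unit[OF x] by blast
  have bound: "M w x \<le> norm w / e" for w
    using cone_M_le_iff[OF x] e by simp
  have diff: "M u x - M v x \<le> norm (u - v) / e" for u v
    using cone_M_subadd[OF x, of v "u - v"] bound[of "u - v"] by simp
  have "dist (M u x) (M v x) \<le> inverse e * dist u v" for u v
    using diff[of u v] diff[of v u]
    by (simp add: dist_norm dist_real_def norm_minus_commute divide_inverse mult.commute abs_le_iff)
  then show ?thesis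
    using e(1) by (intro that lipschitz_onI) auto
qed

lemma isCont_cone_M_left: "x \<in> C \<Longrightarrow> isCont (\<lambda>y. M y x) y"
  by (metis lipschitz_cone_M_left lipschitz_on_continuous_within UNIV_I)

lemma isCont_cone_M_right:
  assumes x: "x \<in> C"
  shows "isCont (M y) x"
proof -
  obtain e where e: "0 < e" "\<And>w. (norm w / e) *\<^sub>R x - w \<in> closure C"
    using order_unit[OF x] by blast
  define d where "d z = norm (z - x) / e" for z
  have d_nonneg: "0 \<le> d z" for z
    using e(1) by (simp add: d_def)
  have "(d \<longlongrightarrow> norm (x - x) / e) (at x)"
    unfolding d_def using e(1) by (intro tendsto_intros) auto
  then have d_lim: "(d \<longlongrightarrow> 0) (at x)"
    by simp
  have lower: "M y x / (1 + d z) \<le> M y z" if z: "z \<in> C" for z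
  proof -
    have "(1 + d z) *\<^sub>R x - z = (norm (z - x) / e) *\<^sub>R x - (z - x)"
      by (simp add: d_def algebra_simps)
    also have "\<dots> \<in> closure C"
      by (rule e(2))
    finally have "inverse (1 + d z) *\<^sub>R ((1 + d z) *\<^sub>R x - z) \<in> closure C"
      using d_nonneg[of z] by (intro scaleR_mem_closure) auto
    moreover have "inverse (1 + d z) *\<^sub>R ((1 + d z) *\<^sub>R x - z) = x - inverse (1 + d z) *\<^sub>R z"
      using d_nonneg[of z] by (simp add: scaleR_diff_right add_nonneg_eq_0_iff)
    ultimately have "M y x \<le> M y z * (1 + d z)"
      using cone_M_antimono[OF z, of "inverse (1 + d z)" x y] d_nonneg[of z]
      by (simp add: divide_inverse)
    then show ?thesis
      using d_nonneg[of z] by (simp add: pos_divide_le_eq add_pos_nonneg)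
  qed
  have upper: "M y z \<le> M y x / (1 - d z)" if "d z < 1" for z
  proof (rule cone_M_antimono[OF x])
    have "z - (1 - d z) *\<^sub>R x = (norm (x - z) / e) *\<^sub>R x - (x - z)"
      by (simp add: d_def algebra_simps norm_minus_commute)
    also have "\<dots> \<in> closure C"
      by (rule e(2))
    finally show "z - (1 - d z) *\<^sub>R x \<in> closure C" .
  qed (use that in simp)
  have "\<forall>\<^sub>F z in at x. M y x / (1 + d z) \<le> M y z"
    using eventually_at_in_open'[OF open_C x] by eventually_elim (rule lower)
  moreover have "\<forall>\<^sub>F z in at x. M y z \<le> M y x / (1 - d z)"
    using order_tendstoD(2)[OF d_lim zero_less_one] by eventually_elim (rule upper)
  moreover have "((\<lambda>z. M y x / (1 + d z)) \<longlongrightarrow> M y x / (1 + 0)) (at x)"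
    using d_lim by (intro tendsto_intros) auto
  then have "((\<lambda>z. M y x / (1 + d z)) \<longlongrightarrow> M y x) (at x)"
    by simp
  moreover have "((\<lambda>z. M y x / (1 - d z)) \<longlongrightarrow> M y x / (1 - 0)) (at x)"
    using d_lim by (intro tendsto_intros) auto
  then have "((\<lambda>z. M y x / (1 - d z)) \<longlongrightarrow> M y x) (at x)"
    by simp
  ultimately show ?thesis
    unfolding isCont_def by (rule tendsto_sandwich)
qed

lemma filterlim_cone_M_at_top:
  assumes b: "b \<in> C" and xs: "\<And>n. xs n \<in> C" and lim: "xs \<longlonglongrightarrow> z" and z: "z \<notin> C"
  shows "filterlim (\<lambda>n. M b (xs n)) at_top sequentially"
  unfolding filterlim_at_top_gt[where c = 0]
proof (intro allI impI)
  fix L :: real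
  assume L: "0 < L"
  have "L *\<^sub>R z - b \<notin> closure C"
  proof
    assume "L *\<^sub>R z - b \<in> closure C"
    from scaleR_mem[OF _ add_closure_mem[OF b this], of "inverse L"] L z
    show False by simp
  qed
  moreover have "(\<lambda>n. L *\<^sub>R xs n - b) \<longlonglongrightarrow> L *\<^sub>R z - b"
    using lim by (intro tendsto_intros)
  ultimately have "\<forall>\<^sub>F n in sequentially. L *\<^sub>R xs n - b \<in> - closure C"
    by (intro topological_tendstoD) auto
  then show "\<forall>\<^sub>F n in sequentially. L \<le> M b (xs n)"
  proof eventually_elim
    case (elim n)
    then have "\<not> M b (xs n) \<le> L"
      using cone_M_le_iff[OF xs] L by simp
    then show ?case by simp
  qed
qed

lemma one_le_cone_M_add_right:
  assumes p: "p \<in> C" and k: "k \<in> closure C" "k \<notin> C"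
  shows "1 \<le> M p (p + k)"
proof (rule ccontr)
  define l where "l = M p (p + k)"
  assume "\<not> 1 \<le> M p (p + k)"
  then have l: "0 \<le> l" "l < 1"
    using cone_M_nonneg add_closure_mem[OF p k(1)] by (auto simp: l_def)
  have "(1 - l) *\<^sub>R p + (l *\<^sub>R (p + k) - p) \<in> C"
    using add_closure_mem[OF scaleR_mem[OF _ p] cone_M_mem[OF add_closure_mem[OF p k(1)]]] l
    by (simp add: l_def)
  then have lk: "l *\<^sub>R k \<in> C"
    by (simp add: algebra_simps)
  then have "l \<noteq> 0"
    using zero_notin_C by auto
  then have "k \<in> C"
    using scaleR_mem[OF _ lk, of "inverse l"] l(1) by simp
  with k(2) show False ..
qed

end

locale proper_cone_geometry = open_cone_geometry +
  assumes no_lines: "contains_no_lines C"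
begin

lemma closure_pointed:
  assumes k: "k \<in> closure C" "- k \<in> closure C"
  shows "k = 0"
proof (rule ccontr)
  assume "k \<noteq> 0"
  obtain x where x: "x \<in> C"
    using C_nonempty by blast
  have "x + t *\<^sub>R k \<in> C" for t
  proof (cases "0 \<le> t")
    case True
    then show ?thesis using add_closure_mem[OF x scaleR_mem_closure[OF _ k(1)]] by simp
  next
    case False
    then show ?thesis using add_closure_mem[OF x scaleR_mem_closure[OF _ k(2)], of "- t"] by simp
  qed
  with \<open>k \<noteq> 0\<close> no_lines show False
    unfolding contains_no_lines_def by blast
qed

lemma cone_M_pos:
  assumes x: "x \<in> C" and y: "y \<in> closure C" "y \<noteq> 0"
  shows "0 < M y x"
proof -
  have "\<not> M y x \<le> 0"
    using cone_M_le_iff[OF x, of 0 y] closure_pointed[OF y(1)] y(2) by auto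
  then show ?thesis by simp
qed

lemma cone_M_pos_interior: "x \<in> C \<Longrightarrow> y \<in> C \<Longrightarrow> 0 < M y x"
  using cone_M_pos closure_subset zero_notin_C by blast

lemma one_less_cone_M_add_left:
  assumes p: "p \<in> C" and k: "k \<in> closure C" "k \<noteq> 0"
  shows "1 < M (p + k) p"
proof -
  have "\<not> M (p + k) p \<le> 1"
    using cone_M_le_iff[OF p, of 1 "p + k"] closure_pointed[OF k(1)] k(2) by auto
  then show ?thesis by simp
qed

lemma hilbert_scaleR_right:
  assumes "x \<in> C" "y \<in> C" "0 < c"
  shows "hilbert C y (c *\<^sub>R x) = hilbert C y x"
  using assms cone_M_pos_interior[OF assms(1,2)] cone_M_pos_interior[OF assms(2,1)]
  by (simp add: hilbert_def funk_def cone_M_scaleR_left cone_M_scaleR_right ln_div ln_mult)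

lemma tendsto_rev_funk:
  assumes y: "y \<in> C" and lim: "xs \<longlonglongrightarrow> x" and x: "x \<in> closure C" "x \<noteq> 0"
  shows "(\<lambda>n. rev_funk C y (xs n)) \<longlonglongrightarrow> rev_funk C y x"
  unfolding rev_funk_def funk_def
  using isCont_tendsto_compose[OF isCont_cone_M_left[OF y] lim] cone_M_pos[OF y x]
  by (intro tendsto_ln) auto

lemma tendsto_hilbert_right:
  assumes y: "y \<in> C" and z: "z \<in> C" and lim: "xs \<longlonglongrightarrow> z"
  shows "(\<lambda>n. hilbert C y (xs n)) \<longlonglongrightarrow> hilbert C y z"
proof -
  have "(\<lambda>n. funk C y (xs n)) \<longlonglongrightarrow> funk C y z"
    unfolding funk_def
    using isCont_tendsto_compose[OF isCont_cone_M_right[OF z] lim] cone_M_pos_interior[OF z y]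
    by (intro tendsto_ln) auto
  moreover have "(\<lambda>n. rev_funk C y (xs n)) \<longlonglongrightarrow> rev_funk C y z"
    using tendsto_rev_funk[OF y lim] z closure_subset zero_notin_C by blast
  ultimately show ?thesis
    unfolding hilbert_def rev_funk_def by (rule tendsto_add)
qed

lemma d_converges_hilbert_iff_funk:
  assumes b: "b \<in> C" and lim: "xs \<longlonglongrightarrow> x" and x: "x \<in> closure C" "x \<noteq> 0"
  shows "d_converges (hilbert C) C b xs g \<longleftrightarrow>
    d_converges (funk C) C b xs (\<lambda>y. g y - r_fun C b x y)"
proof -
  let ?F = "\<lambda>y n. funk C y (xs n) - funk C b (xs n)"
  let ?R = "\<lambda>y n. rev_funk C y (xs n) - rev_funk C b (xs n)"
  have R: "?R y \<longlonglongrightarrow> r_fun C b x y" if "y \<in> C" for y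
    unfolding r_fun_def using tendsto_rev_funk[OF _ lim x] that b by (intro tendsto_diff)
  have H: "hilbert C y (xs n) - hilbert C b (xs n) = ?F y n + ?R y n" for y n
    by (simp add: hilbert_def rev_funk_def)
  show ?thesis
    unfolding d_converges_def H
  proof (intro ball_cong[OF refl] iffI)
    fix y assume "y \<in> C" "(\<lambda>n. ?F y n + ?R y n) \<longlonglongrightarrow> g y"
    from tendsto_diff[OF this(2) R[OF this(1)]] show "?F y \<longlonglongrightarrow> g y - r_fun C b x y"
      by simp
  next
    fix y assume "y \<in> C" "?F y \<longlonglongrightarrow> g y - r_fun C b x y"
    from tendsto_add[OF this(2) R[OF this(1)]] show "(\<lambda>n. ?F y n + ?R y n) \<longlonglongrightarrow> g y"
      by simp
  qed
qed

lemma tendsto_cone_M_ratio: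
  assumes b: "b \<in> C" and y: "y \<in> C" and xs: "\<And>n. xs n \<in> C"
    and lim: "(\<lambda>n. funk C y (xs n) - funk C b (xs n)) \<longlonglongrightarrow> l"
  shows "(\<lambda>n. M y (xs n) / M b (xs n)) \<longlonglongrightarrow> exp l"
proof -
  have "(\<lambda>n. exp (funk C y (xs n) - funk C b (xs n))) \<longlonglongrightarrow> exp l"
    using lim by (rule tendsto_exp)
  then show ?thesis
    using cone_M_pos_interior[OF xs b] cone_M_pos_interior[OF xs y] by (simp add: funk_def exp_diff)
qed

text \<open>
  The upper bound uses M(z/x_n) \<le> 1 + M((z - x_n)/x_n), where the last term is o(M(b/x_n)) while
  M(b/x_n) \<rightarrow> \<infinity>.
\<close>

lemma funk_limit_translation_invariant:
  assumes b: "b \<in> C" and xs: "\<And>n. xs n \<in> C" and lim: "xs \<longlonglongrightarrow> z"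
    and z: "z \<in> closure C" "z \<notin> C"
    and conv: "d_converges (funk C) C b xs f" and y: "y \<in> C"
  shows "f (y + z) = f y"
proof -
  have yz: "y + z \<in> C"
    using add_closure_mem[OF y z(1)] .
  define B where "B n = M b (xs n)" for n
  have B_pos: "0 < B n" for n
    unfolding B_def using cone_M_pos_interior[OF xs b] .
  have ratio: "(\<lambda>n. M u (xs n) / B n) \<longlonglongrightarrow> exp (f u)" if "u \<in> C" for u
    unfolding B_def using conv that by (intro tendsto_cone_M_ratio[OF b that xs]) (simp add: d_converges_def)
  have "exp (f y) \<le> exp (f (y + z))"
  proof (rule LIMSEQ_le[OF ratio[OF y] ratio[OF yz]])
    have mono: "M y (xs n) \<le> M (y + z) (xs n)" for n
      using cone_M_mono[OF xs, of 1 "y + z" y] z(1) by simp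
    show "\<exists>N. \<forall>n\<ge>N. M y (xs n) / B n \<le> M (y + z) (xs n) / B n"
      using mono B_pos by (intro exI[of _ 0] allI impI divide_right_mono) (auto intro: less_imp_le)
  qed
  moreover have "exp (f (y + z)) \<le> exp (f y)"
  proof -
    obtain e where e: "0 < e" "\<And>w. (norm w / e) *\<^sub>R b - w \<in> closure C"
      using order_unit[OF b] by blast
    have bound: "M (y + z) (xs n) / B n \<le> M y (xs n) / B n + 1 / B n + norm (z - xs n) / e" for n
    proof -
      have "M (y + z) (xs n) \<le> M y (xs n) + M z (xs n)"
        using cone_M_subadd[OF xs] .
      also have "M z (xs n) \<le> M (xs n) (xs n) + M (z - xs n) (xs n)"
        using cone_M_subadd[OF xs, of "xs n" "z - xs n"] by simp
      also have "M (xs n) (xs n) \<le> 1"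
        using cone_M_self_le[OF xs] .
      also have "M (z - xs n) (xs n) \<le> norm (z - xs n) / e * B n"
        using cone_M_mono[OF xs _ e(2)] e(1) by (simp add: B_def)
      finally show ?thesis
        using B_pos[of n] by (simp add: field_simps)
    qed
    have "(\<lambda>n. inverse (B n)) \<longlonglongrightarrow> 0"
      unfolding B_def using filterlim_cone_M_at_top[OF b xs lim z(2)] by (rule tendsto_inverse_0_at_top)
    moreover have "(\<lambda>n. norm (z - xs n) / e) \<longlonglongrightarrow> norm (z - z) / e"
      using lim e(1) by (intro tendsto_intros) auto
    ultimately have "(\<lambda>n. M y (xs n) / B n + 1 / B n + norm (z - xs n) / e) \<longlonglongrightarrow> exp (f y) + 0 + 0"
      using ratio[OF y] by (intro tendsto_add) (auto simp: divide_inverse)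
    with bound show ?thesis
      by (intro LIMSEQ_le[OF ratio[OF yz]]) auto
  qed
  ultimately show ?thesis
    by simp
qed

lemma funk_limit_not_internal:
  assumes b: "b \<in> C" and xs: "\<And>n. xs n \<in> C" and lim: "xs \<longlonglongrightarrow> z"
    and z: "z \<in> closure C" "z \<notin> C" "z \<noteq> 0" and conv: "d_converges (funk C) C b xs f"
  shows "\<not> (\<exists>p\<in>C. \<forall>y\<in>C. f y = funk C y p - funk C b p)"
proof
  assume "\<exists>p\<in>C. \<forall>y\<in>C. f y = funk C y p - funk C b p"
  then obtain p where p: "p \<in> C" and f: "\<forall>y\<in>C. f y = funk C y p - funk C b p"
    by blast
  have pz: "p + z \<in> C"
    using add_closure_mem[OF p z(1)] .
  have "f (p + z) = f p"
    using funk_limit_translation_invariant[OF b xs lim z(1,2) conv p] .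
  then have "ln (M (p + z) p) = ln (M p p)"
    using f pz p by (simp add: funk_def)
  moreover have "M p p < M (p + z) p"
    using cone_M_self_le[OF p] one_less_cone_M_add_left[OF p z(1,3)] by simp
  ultimately show False
    using cone_M_pos_interior[OF p p] by simp
qed

lemma hilbert_limit_not_internal:
  assumes b: "b \<in> C" and xs: "\<And>n. xs n \<in> C" and lim: "xs \<longlonglongrightarrow> x"
    and x: "x \<in> closure C" "x \<notin> C" "x \<noteq> 0" and conv: "d_converges (funk C) C b xs f"
    and g: "\<And>y. y \<in> C \<Longrightarrow> g y = r_fun C b x y + f y"
  shows "\<not> (\<exists>p\<in>C. \<forall>y\<in>C. g y = hilbert C y p - hilbert C b p)"
proof
  assume "\<exists>p\<in>C. \<forall>y\<in>C. g y = hilbert C y p - hilbert C b p"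
  then obtain p where p: "p \<in> C" and g_eq: "\<forall>y\<in>C. g y = hilbert C y p - hilbert C b p"
    by blast
  have px: "p + x \<in> C"
    using add_closure_mem[OF p x(1)] .
  have "g (p + x) - g p = ln (M x (p + x)) - ln (M x p)"
    using g[OF px] g[OF p] funk_limit_translation_invariant[OF b xs lim x(1,2) conv p]
    by (simp add: r_fun_def rev_funk_def funk_def)
  also have "\<dots> \<le> 0"
    using cone_M_antimono[OF p, of 1 "p + x" x] x(1) cone_M_pos[OF px x(1,3)] by simp
  finally have "g (p + x) - g p \<le> 0" .
  moreover have "g (p + x) - g p = ln (M (p + x) p) + ln (M p (p + x)) - 2 * ln (M p p)"
    using g_eq px p by (simp add: hilbert_def funk_def)
  moreover have "0 < ln (M (p + x) p)" and "0 \<le> ln (M p (p + x))" and "ln (M p p) \<le> 0"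
    using one_less_cone_M_add_left[OF p x(1,3)] one_le_cone_M_add_right[OF p x(1,2)]
      cone_M_self_le[OF p] cone_M_pos_interior[OF p p] by auto
  ultimately show False
    by linarith
qed

lemma hilbert_limit_normalised:
  assumes b: "b \<in> C" and xs: "\<And>n. xs n \<in> C" and conv: "d_converges (hilbert C) C b xs g"
  obtains ws z where "\<And>n. ws n \<in> C" "ws \<longlonglongrightarrow> z" "norm z = 1"
    "d_converges (hilbert C) C b ws g"
proof -
  define zs where "zs n = inverse (norm (xs n)) *\<^sub>R xs n" for n
  have norm_pos: "0 < norm (xs n)" for n
    using xs zero_notin_C by (metis zero_less_norm_iff)
  have zs: "zs n \<in> C" "zs n \<in> sphere 0 1" for n
    using scaleR_mem[OF _ xs] norm_pos[of n] by (auto simp: zs_def)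
  obtain z r where z: "z \<in> sphere 0 1" and r: "strict_mono r" and lim: "(zs \<circ> r) \<longlonglongrightarrow> z"
    using compact_imp_seq_compact[OF compact_sphere] zs(2) unfolding seq_compact_def by meson
  have zs_eq: "hilbert C y (zs n) = hilbert C y (xs n)" if "y \<in> C" for y n
    unfolding zs_def using hilbert_scaleR_right[OF xs that] norm_pos[of n] by simp
  have "d_converges (hilbert C) C b (zs \<circ> r) g"
    unfolding d_converges_def
  proof
    fix y assume y: "y \<in> C"
    have "(\<lambda>n. hilbert C y (xs n) - hilbert C b (xs n)) \<longlonglongrightarrow> g y"
      using conv y by (simp add: d_converges_def)
    from LIMSEQ_subseq_LIMSEQ[OF this r]
    show "(\<lambda>n. hilbert C y ((zs \<circ> r) n) - hilbert C b ((zs \<circ> r) n)) \<longlonglongrightarrow> g y"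
      using zs_eq[OF y] zs_eq[OF b] by (simp add: o_def)
  qed
  then show ?thesis
    using that[of "zs \<circ> r" z] zs(1) z lim by simp
qed

lemma hilbert_horofunction_decompose:
  assumes b: "b \<in> C" and g: "g \<in> horofunctions (hilbert C) C b"
  shows "\<exists>x\<in>frontier C - {0}. \<exists>f\<in>A_set C b x. g = (\<lambda>y. if y \<in> C then r_fun C b x y + f y else 0)"
proof -
  obtain xs where g0: "\<And>y. y \<notin> C \<Longrightarrow> g y = 0" and xs: "\<And>n. xs n \<in> C"
    and conv: "d_converges (hilbert C) C b xs g"
    and not_internal: "\<not> (\<exists>p\<in>C. \<forall>y\<in>C. g y = hilbert C y p - hilbert C b p)"
    using g unfolding horofunctions_def by blast
  obtain ws z where ws: "\<And>n. ws n \<in> C" and lim: "ws \<longlonglongrightarrow> z" and z_norm: "norm z = 1"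
    and ws_conv: "d_converges (hilbert C) C b ws g"
    using hilbert_limit_normalised[OF b xs conv] by blast
  have z: "z \<in> closure C" "z \<noteq> 0"
    using ws lim z_norm closure_sequential by auto
  have "z \<notin> C"
  proof
    assume "z \<in> C"
    have "g y = hilbert C y z - hilbert C b z" if y: "y \<in> C" for y
    proof (rule LIMSEQ_unique)
      show "(\<lambda>n. hilbert C y (ws n) - hilbert C b (ws n)) \<longlonglongrightarrow> g y"
        using ws_conv y by (simp add: d_converges_def)
      show "(\<lambda>n. hilbert C y (ws n) - hilbert C b (ws n)) \<longlonglongrightarrow> hilbert C y z - hilbert C b z"
        using tendsto_hilbert_right[OF y \<open>z \<in> C\<close> lim] tendsto_hilbert_right[OF b \<open>z \<in> C\<close> lim]
        by (rule tendsto_diff)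
    qed
    with not_internal \<open>z \<in> C\<close> show False
      by blast
  qed
  define f where "f y = (if y \<in> C then g y - r_fun C b z y else 0)" for y
  have f_conv: "d_converges (funk C) C b ws f"
    using ws_conv d_converges_hilbert_iff_funk[OF b lim z, of g]
      d_converges_cong[of C f "\<lambda>y. g y - r_fun C b z y"]
    by (simp add: f_def)
  have "f \<in> A_set C b z"
    unfolding A_set_def horofunctions_def
    using f_conv ws lim funk_limit_not_internal[OF b ws lim z(1) \<open>z \<notin> C\<close> z(2) f_conv]
    by (auto simp: f_def)
  moreover have "g = (\<lambda>y. if y \<in> C then r_fun C b z y + f y else 0)"
    using g0 by (auto simp: f_def)
  ultimately show ?thesis
    using z \<open>z \<notin> C\<close> frontier_C by blast
qed

lemma hilbert_horofunction_of_funk: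
  assumes b: "b \<in> C" and x: "x \<in> frontier C - {0}" and f: "f \<in> A_set C b x"
  shows "(\<lambda>y. if y \<in> C then r_fun C b x y + f y else 0) \<in> horofunctions (hilbert C) C b"
    (is "?g \<in> _")
proof -
  obtain xs where xs: "\<And>n. xs n \<in> C" and lim: "xs \<longlonglongrightarrow> x"
    and conv: "d_converges (funk C) C b xs f"
    using f unfolding A_set_def by blast
  have x': "x \<in> closure C" "x \<notin> C" "x \<noteq> 0"
    using x frontier_C by auto
  have "d_converges (hilbert C) C b xs ?g"
    using conv d_converges_hilbert_iff_funk[OF b lim x'(1,3), of ?g]
      d_converges_cong[of C "\<lambda>y. ?g y - r_fun C b x y" f]
    by simp
  moreover have "\<not> (\<exists>p\<in>C. \<forall>y\<in>C. ?g y = hilbert C y p - hilbert C b p)"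
    by (rule hilbert_limit_not_internal[OF b xs lim x' conv]) simp
  ultimately show ?thesis
    unfolding horofunctions_def using xs by auto
qed

end

theorem mainTheorem7:
  fixes C :: "'a::euclidean_space set" and b :: 'a
  assumes "open_cone C" and "contains_no_lines C" and "b \<in> C"
  shows "horofunctions (hilbert C) C b =
    {g. \<exists>x\<in>frontier C - {0}. \<exists>f\<in>A_set C b x.
          g = (\<lambda>y. if y \<in> C then r_fun C b x y + f y else 0)}"
proof -
  interpret proper_cone_geometry C
    using assms(1,2) by unfold_locales
  show ?thesis
    using hilbert_horofunction_decompose[OF assms(3)] hilbert_horofunction_of_funk[OF assms(3)]
    by blast
qed

end
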